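(* Let $G$ be a finite vertex-labeled graph, $r\ge1$, and $v,w$ vertices of $G$ such that: (i) there is a label-preserving graph isomorphism $\varphi$ from $\mathcal S(v;1,2r)$ onto $\mathcal S(w;1,2r)$ satisfying $\mathrm d(w,\varphi(x))=\mathrm d(v,x)$ for every vertex $x$ of $\mathcal S(v;1,2r)$; (ii) $\mathrm d(v,w)>2r$; (iii) the graph $G'$ obtained from $G$ by switching $\mathcal N_1(v)$ and $\mathcal N_1(w)$ is not isomorphic to $G$ (as a labeled graph). Then $G$ and $G'$ have the same multiset of rooted labeled $r$-neighborhoods; in particular $G$ is not identifiable from its $r$-neighborhoods.
   Context: $\mathrm d$ denotes graph distance in $G$. For $t>s>0$, the shell $\mathcal S(v;s,t)$ is the subgraph of $G$ formed by all edges both of whose endpoints have distance from $v$ between $s$ and $t$ inclusive (together with the endpoints of these edges, so it has no isolated vertices). "Switching $\mathcal N_1(v)$ and $\mathcal N_1(w)$" means: $G'$ has the same vertex set as $G$; $v$ and $w$ exchange labels; every neighbor of $v$ that is not a vertex of $\mathcal S(v;1,2r)$ is made adjacent to $w$ instead of $v$, and every neighbor of $w$ that is not a vertex of $\mathcal S(w;1,2r)$ is made adjacent to $v$ instead of $w$; all other edges and labels are unchanged. The $r$-neighborhood $\mathcal N_r(u)$ is the subgraph induced by vertices at distance at most $r$ from $u$, rooted at $u$, with labels, up to root- and label-preserving isomorphism. $G$ is identifiable from its $r$-neighborhoods if every labeled graph on the same number of vertices with the same multiset $\{\mathcal N_r(u)\}$ is isomorphic to $G$. *)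

theory Defs
  imports "HOL-Library.Extended_Nat"
begin

definition lgraph :: "'a set \<Rightarrow> ('a \<Rightarrow> 'a \<Rightarrow> bool) \<Rightarrow> bool" where
  "lgraph V E \<longleftrightarrow> finite V \<and> (\<forall>x y. E x y \<longrightarrow> x \<in> V \<and> y \<in> V)
     \<and> (\<forall>x y. E x y \<longrightarrow> E y x) \<and> (\<forall>x. \<not> E x x)"

fun reach_le :: "('a \<Rightarrow> 'a \<Rightarrow> bool) \<Rightarrow> 'a \<Rightarrow> 'a \<Rightarrow> nat \<Rightarrow> bool" where
  "reach_le E u x 0 = (u = x)"
| "reach_le E u x (Suc n) = (reach_le E u x n \<or> (\<exists>y. reach_le E u y n \<and> E y x))"

definition gdist :: "('a \<Rightarrow> 'a \<Rightarrow> bool) \<Rightarrow> 'a \<Rightarrow> 'a \<Rightarrow> enat" where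
  "gdist E u x = (if \<exists>n. reach_le E u x n then enat (LEAST n. reach_le E u x n) else \<infinity>)"

text \<open>Shell S(v;s,t): edges both of whose endpoints have distance in [s,t] from v,
 together with their endpoints.\<close>
definition shell_edge :: "('a \<Rightarrow> 'a \<Rightarrow> bool) \<Rightarrow> 'a \<Rightarrow> nat \<Rightarrow> nat \<Rightarrow> 'a \<Rightarrow> 'a \<Rightarrow> bool" where
  "shell_edge E v s t x y \<longleftrightarrow> E x y
     \<and> enat s \<le> gdist E v x \<and> gdist E v x \<le> enat t
     \<and> enat s \<le> gdist E v y \<and> gdist E v y \<le> enat t"

definition shell_verts :: "('a \<Rightarrow> 'a \<Rightarrow> bool) \<Rightarrow> 'a \<Rightarrow> nat \<Rightarrow> nat \<Rightarrow> 'a set" where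
  "shell_verts E v s t = {x. \<exists>y. shell_edge E v s t x y}"

definition shell_iso ::
  "('a \<Rightarrow> 'a \<Rightarrow> bool) \<Rightarrow> ('a \<Rightarrow> 'l) \<Rightarrow> nat \<Rightarrow> 'a \<Rightarrow> 'a \<Rightarrow> ('a \<Rightarrow> 'a) \<Rightarrow> bool" where
  "shell_iso E lab r v w \<phi> \<longleftrightarrow>
     bij_betw \<phi> (shell_verts E v 1 (2*r)) (shell_verts E w 1 (2*r))
   \<and> (\<forall>x\<in>shell_verts E v 1 (2*r). \<forall>y\<in>shell_verts E v 1 (2*r).
        shell_edge E v 1 (2*r) x y \<longleftrightarrow> shell_edge E w 1 (2*r) (\<phi> x) (\<phi> y))
   \<and> (\<forall>x\<in>shell_verts E v 1 (2*r). lab (\<phi> x) = lab x)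
   \<and> (\<forall>x\<in>shell_verts E v 1 (2*r). gdist E w (\<phi> x) = gdist E v x)"

text \<open>Neighbours of v that are not vertices of S(v;1,2r) (these get moved).\<close>
definition moved :: "('a \<Rightarrow> 'a \<Rightarrow> bool) \<Rightarrow> nat \<Rightarrow> 'a \<Rightarrow> 'a set" where
  "moved E r v = {p. E v p \<and> p \<notin> shell_verts E v 1 (2*r)}"

definition switch_E :: "('a \<Rightarrow> 'a \<Rightarrow> bool) \<Rightarrow> nat \<Rightarrow> 'a \<Rightarrow> 'a \<Rightarrow> 'a \<Rightarrow> 'a \<Rightarrow> bool" where
  "switch_E E r v w x y \<longleftrightarrow>
     (E x y
       \<and> \<not> (x = v \<and> y \<in> moved E r v) \<and> \<not> (y = v \<and> x \<in> moved E r v)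
       \<and> \<not> (x = w \<and> y \<in> moved E r w) \<and> \<not> (y = w \<and> x \<in> moved E r w))
   \<or> (x = w \<and> y \<in> moved E r v) \<or> (y = w \<and> x \<in> moved E r v)
   \<or> (x = v \<and> y \<in> moved E r w) \<or> (y = v \<and> x \<in> moved E r w)"

definition switch_lab :: "('a \<Rightarrow> 'l) \<Rightarrow> 'a \<Rightarrow> 'a \<Rightarrow> 'a \<Rightarrow> 'l" where
  "switch_lab lab v w = lab(v := lab w, w := lab v)"

definition lgraph_iso ::
  "'a set \<Rightarrow> ('a \<Rightarrow> 'a \<Rightarrow> bool) \<Rightarrow> ('a \<Rightarrow> 'l) \<Rightarrow> 'b set \<Rightarrow> ('b \<Rightarrow> 'b \<Rightarrow> bool) \<Rightarrow> ('b \<Rightarrow> 'l) \<Rightarrow> bool" where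
  "lgraph_iso V E lab V' E' lab' \<longleftrightarrow> (\<exists>f. bij_betw f V V'
     \<and> (\<forall>x\<in>V. \<forall>y\<in>V. E x y \<longleftrightarrow> E' (f x) (f y))
     \<and> (\<forall>x\<in>V. lab' (f x) = lab x))"

definition ball_verts :: "'a set \<Rightarrow> ('a \<Rightarrow> 'a \<Rightarrow> bool) \<Rightarrow> nat \<Rightarrow> 'a \<Rightarrow> 'a set" where
  "ball_verts V E r u = {x\<in>V. gdist E u x \<le> enat r}"

definition nbhd_iso ::
  "'a set \<Rightarrow> ('a \<Rightarrow> 'a \<Rightarrow> bool) \<Rightarrow> ('a \<Rightarrow> 'l) \<Rightarrow> 'b set \<Rightarrow> ('b \<Rightarrow> 'b \<Rightarrow> bool) \<Rightarrow> ('b \<Rightarrow> 'l)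
     \<Rightarrow> nat \<Rightarrow> 'a \<Rightarrow> 'b \<Rightarrow> bool" where
  "nbhd_iso V E lab V' E' lab' r u u' \<longleftrightarrow> (\<exists>f.
     bij_betw f (ball_verts V E r u) (ball_verts V' E' r u') \<and> f u = u'
     \<and> (\<forall>x\<in>ball_verts V E r u. \<forall>y\<in>ball_verts V E r u. E x y \<longleftrightarrow> E' (f x) (f y))
     \<and> (\<forall>x\<in>ball_verts V E r u. lab' (f x) = lab x))"

text \<open>Equality of the multisets of r-neighbourhoods (up to rooted labelled isomorphism):
 a bijection of vertices matching each neighbourhood with an isomorphic one.\<close>
definition same_nbhds ::
  "'a set \<Rightarrow> ('a \<Rightarrow> 'a \<Rightarrow> bool) \<Rightarrow> ('a \<Rightarrow> 'l) \<Rightarrow> 'b set \<Rightarrow> ('b \<Rightarrow> 'b \<Rightarrow> bool) \<Rightarrow> ('b \<Rightarrow> 'l)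
     \<Rightarrow> nat \<Rightarrow> bool" where
  "same_nbhds V E lab V' E' lab' r \<longleftrightarrow> (\<exists>\<sigma>. bij_betw \<sigma> V V'
     \<and> (\<forall>u\<in>V. nbhd_iso V E lab V' E' lab' r u (\<sigma> u)))"

text \<open>Identifiability from r-neighbourhoods (competitor graphs range over graphs
 whose vertices are of the same type).\<close>
definition identifiable :: "'a set \<Rightarrow> ('a \<Rightarrow> 'a \<Rightarrow> bool) \<Rightarrow> ('a \<Rightarrow> 'l) \<Rightarrow> nat \<Rightarrow> bool" where
  "identifiable V E lab r \<longleftrightarrow> (\<forall>V' E' (lab' :: 'a \<Rightarrow> 'l).
     lgraph V' E' \<and> card V' = card V \<and> same_nbhds V E lab V' E' lab' r
       \<longrightarrow> lgraph_iso V E lab V' E' lab')"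

end

theory Submission
  imports Defs
begin

text \<open>
  Let \<sigma> send v to w, each vertex x of the shell S(v;1,2r) to \<phi> x and fix the pendant leaves at v
  (these are exactly the neighbours that the switching moves); symmetrically \<sigma> acts on the
  w side by the inverse of \<phi>, and it is the identity elsewhere. As d(v,w) > 2r, the r-balls
  around v and w are disjoint and \<sigma> is an involution of V.
  The 2r-ball of v consists of v, its leaves and its shell, and \<sigma> maps it isomorphically onto
  w, the leaves of v and the shell of w in G': after switching, w carries the leaves of v while
  keeping its own shell, the \<phi>-image of the shell of v at the same distances. The
  r-neighbourhood of a vertex within distance r of v lies in this 2r-ball together with all its
  edges, so \<sigma> restricts to an isomorphism of r-neighbourhoods. Every other vertex sees neither
  v nor w within distance r, and G and G' agree away from v and w.
\<close>

lemma reach_le_mono: "reach_le E a b m \<Longrightarrow> m \<le> n \<Longrightarrow> reach_le E a b n"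
  by (induction n) (auto simp: le_Suc_eq)

lemma reach_le_trans: "reach_le E a b m \<Longrightarrow> reach_le E b c n \<Longrightarrow> reach_le E a c (m + n)"
  by (induction n arbitrary: c) auto

lemma reach_le_sym:
  assumes sym: "\<And>x y. E x y \<Longrightarrow> E y x" and "reach_le E a b n"
  shows "reach_le E b a n"
  using assms(2)
proof (induction n arbitrary: b)
  case (Suc n)
  then consider "reach_le E a b n" | y where "reach_le E a y n" "E y b" by auto
  then show ?case
  proof cases
    case 1
    then show ?thesis using Suc.IH by simp
  next
    case 2
    have "reach_le E b y (Suc 0)" using 2 sym by auto
    from reach_le_trans[OF this Suc.IH[OF 2(1)]] show ?thesis by simp
  qed
qed simp

lemma gdist_le_iff_reach_le: "gdist E a b \<le> enat n \<longleftrightarrow> reach_le E a b n"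
proof
  assume le: "gdist E a b \<le> enat n"
  then obtain k where "reach_le E a b k" by (auto simp: gdist_def split: if_splits)
  then have "reach_le E a b (LEAST k. reach_le E a b k)" by (rule LeastI)
  moreover have "(LEAST k. reach_le E a b k) \<le> n"
    using le \<open>reach_le E a b k\<close> unfolding gdist_def by (auto split: if_splits)
  ultimately show "reach_le E a b n" by (rule reach_le_mono)
qed (auto simp: gdist_def intro: Least_le)

lemma gdist_ge_Suc_0_iff: "enat (Suc 0) \<le> gdist E a b \<longleftrightarrow> a \<noteq> b"
proof -
  have "enat (Suc 0) \<le> x \<longleftrightarrow> \<not> x \<le> enat 0" for x :: enat
    by (cases x) auto
  then show ?thesis using gdist_le_iff_reach_le[of E a b 0] by simp
qed

lemma reach_le_last_step:
  "reach_le E a x n \<Longrightarrow> x = a \<or> E a x \<or> (\<exists>y. y \<noteq> a \<and> reach_le E a y n \<and> E y x)"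
proof (induction n arbitrary: x)
  case (Suc n)
  then consider "reach_le E a x n" | y where "reach_le E a y n" "E y x" by auto
  then show ?case
  proof cases
    case 1
    then show ?thesis using Suc.IH by auto
  next
    case 2
    then show ?thesis by (cases "y = a") auto
  qed
qed simp

lemma lgraph_edgeD: "lgraph V E \<Longrightarrow> E x y \<Longrightarrow> x \<in> V \<and> y \<in> V"
  by (simp add: lgraph_def)

lemma lgraph_sym: "lgraph V E \<Longrightarrow> E x y \<Longrightarrow> E y x"
  by (simp add: lgraph_def)

lemma lgraph_irrefl: "lgraph V E \<Longrightarrow> \<not> E x x"
  by (simp add: lgraph_def)

lemma reach_le_in_vertices: "lgraph V E \<Longrightarrow> a \<in> V \<Longrightarrow> reach_le E a x n \<Longrightarrow> x \<in> V"
  by (induction n arbitrary: x) (auto dest: lgraph_edgeD)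

lemma reach_le_local_iso:
  assumes inj: "inj_on f A" and u: "u \<in> A"
    and edges: "\<forall>x\<in>A. \<forall>y\<in>A. E x y \<longleftrightarrow> E' (f x) (f y)"
    and closed: "\<And>x y k. k < r \<Longrightarrow> reach_le E u x k \<Longrightarrow> E x y \<Longrightarrow> y \<in> A"
    and closed': "\<And>x y k. k < r \<Longrightarrow> reach_le E u x k \<Longrightarrow> E' (f x) y \<Longrightarrow> y \<in> f ` A"
    and "n \<le> r"
  shows "(\<forall>x. reach_le E u x n \<longrightarrow> x \<in> A) \<and> (\<forall>y. reach_le E' (f u) y n \<longrightarrow> y \<in> f ` A)
     \<and> (\<forall>x\<in>A. reach_le E u x n \<longleftrightarrow> reach_le E' (f u) (f x) n)"
  using \<open>n \<le> r\<close>
proof (induction n)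
  case 0
  then show ?case using u inj by (auto simp: inj_on_eq_iff)
next
  case (Suc n)
  then have n: "n < r" by simp
  from Suc have inA: "\<And>x. reach_le E u x n \<Longrightarrow> x \<in> A"
    and inA': "\<And>y. reach_le E' (f u) y n \<Longrightarrow> y \<in> f ` A"
    and corr: "\<And>x. x \<in> A \<Longrightarrow> reach_le E u x n \<longleftrightarrow> reach_le E' (f u) (f x) n" by auto
  have "x \<in> A" if "reach_le E u x (Suc n)" for x
    using that inA closed[OF n] by (metis reach_le.simps(2))
  moreover have "y \<in> f ` A" if "reach_le E' (f u) y (Suc n)" for y
  proof -
    from that consider "reach_le E' (f u) y n" | z where "reach_le E' (f u) z n" "E' z y" by auto
    then show ?thesis
    proof cases
      case 2
      then obtain x where "x \<in> A" "z = f x" using inA' by blast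
      then show ?thesis using 2 corr closed'[OF n] by blast
    qed (rule inA')
  qed
  moreover have "reach_le E u x (Suc n) \<longleftrightarrow> reach_le E' (f u) (f x) (Suc n)" if "x \<in> A" for x
  proof -
    have "(\<exists>y. reach_le E u y n \<and> E y x) \<longleftrightarrow> (\<exists>z. reach_le E' (f u) z n \<and> E' z (f x))"
      using that inA inA' corr edges by blast
    then show ?thesis using corr[OF that] by simp
  qed
  ultimately show ?case by blast
qed

lemma nbhd_iso_of_local_iso:
  assumes "A \<subseteq> V" "f ` A \<subseteq> V'" and inj: "inj_on f A" and u: "u \<in> A"
    and edges: "\<forall>x\<in>A. \<forall>y\<in>A. E x y \<longleftrightarrow> E' (f x) (f y)"
    and labels: "\<forall>x\<in>A. lab' (f x) = lab x"
    and closed: "\<And>x y k. k < r \<Longrightarrow> reach_le E u x k \<Longrightarrow> E x y \<Longrightarrow> y \<in> A"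
    and closed': "\<And>x y k. k < r \<Longrightarrow> reach_le E u x k \<Longrightarrow> E' (f x) y \<Longrightarrow> y \<in> f ` A"
  shows "nbhd_iso V E lab V' E' lab' r u (f u)"
proof -
  have "(\<forall>x. reach_le E u x r \<longrightarrow> x \<in> A) \<and> (\<forall>y. reach_le E' (f u) y r \<longrightarrow> y \<in> f ` A)
     \<and> (\<forall>x\<in>A. reach_le E u x r \<longleftrightarrow> reach_le E' (f u) (f x) r)"
    using inj u edges closed closed' order.refl by (rule reach_le_local_iso)
  then have inA: "\<And>x. reach_le E u x r \<Longrightarrow> x \<in> A"
    and inA': "\<And>y. reach_le E' (f u) y r \<Longrightarrow> y \<in> f ` A"
    and corr: "\<And>x. x \<in> A \<Longrightarrow> reach_le E u x r \<longleftrightarrow> reach_le E' (f u) (f x) r"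
    by blast+
  let ?B = "ball_verts V E r u" and ?B' = "ball_verts V' E' r (f u)"
  have B: "?B = {x\<in>V. reach_le E u x r}" and B': "?B' = {y\<in>V'. reach_le E' (f u) y r}"
    by (auto simp: ball_verts_def gdist_le_iff_reach_le)
  have "?B \<subseteq> A" using inA B by blast
  moreover have "f ` ?B = ?B'"
  proof
    show "f ` ?B \<subseteq> ?B'" using assms(2) inA corr unfolding B B' by auto
    show "?B' \<subseteq> f ` ?B"
    proof
      fix y assume "y \<in> ?B'"
      then obtain x where "x \<in> A" "y = f x" "reach_le E' (f u) y r" using inA' B' by blast
      then show "y \<in> f ` ?B" using assms(1) corr B by blast
    qed
  qed
  ultimately have "bij_betw f ?B ?B'"
    using inj by (auto simp: bij_betw_def intro: inj_on_subset)
  then show ?thesis unfolding nbhd_iso_def using \<open>?B \<subseteq> A\<close> edges labels by blast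
qed

lemma shell_vertsD:
  assumes "x \<in> shell_verts E a 1 t"
  shows "x \<noteq> a" "reach_le E a x t"
  using assms by (auto simp: shell_verts_def shell_edge_def gdist_le_iff_reach_le gdist_ge_Suc_0_iff)

lemma shell_vertsI:
  assumes "E x y" "x \<noteq> a" "y \<noteq> a" "reach_le E a x t" "reach_le E a y t"
  shows "x \<in> shell_verts E a 1 t"
  using assms by (auto simp: shell_verts_def shell_edge_def gdist_le_iff_reach_le gdist_ge_Suc_0_iff)

lemma shell_edge_iff_edge:
  assumes "x \<in> shell_verts E a 1 t" "y \<in> shell_verts E a 1 t"
  shows "shell_edge E a 1 t x y \<longleftrightarrow> E x y"
  using shell_vertsD[OF assms(1)] shell_vertsD[OF assms(2)]
  by (auto simp: shell_edge_def gdist_le_iff_reach_le gdist_ge_Suc_0_iff)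

lemma moved_iff_pendant:
  assumes "lgraph V E" "r \<ge> 1"
  shows "p \<in> moved E r a \<longleftrightarrow> E a p \<and> (\<forall>y. E p y \<longrightarrow> y = a)"
proof
  assume p: "p \<in> moved E r a"
  then have ap: "E a p" and notin: "p \<notin> shell_verts E a 1 (2*r)" by (auto simp: moved_def)
  have "y = a" if "E p y" for y
  proof (rule ccontr)
    assume "y \<noteq> a"
    have "reach_le E a p (2*r)" "reach_le E a y (2*r)"
      using ap that assms(2) reach_le_mono[of E a _ "Suc (Suc 0)" "2*r"] by auto
    then have "p \<in> shell_verts E a 1 (2*r)"
      using shell_vertsI[of E p y a] that \<open>y \<noteq> a\<close> lgraph_irrefl[OF assms(1)] ap by blast
    with notin show False ..
  qed
  with ap show "E a p \<and> (\<forall>y. E p y \<longrightarrow> y = a)" by blast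
next
  assume "E a p \<and> (\<forall>y. E p y \<longrightarrow> y = a)"
  then show "p \<in> moved E r a"
    by (auto simp: moved_def shell_verts_def shell_edge_def gdist_ge_Suc_0_iff)
qed

lemma shell_verts_subset: "lgraph V E \<Longrightarrow> shell_verts E a s t \<subseteq> V"
  by (auto simp: shell_verts_def shell_edge_def dest: lgraph_edgeD)

lemma near_vertex_cases:
  assumes sym: "\<And>x y. E x y \<Longrightarrow> E y x" and "reach_le E a x (2*r)"
  shows "x = a \<or> x \<in> moved E r a \<or> x \<in> shell_verts E a 1 (2*r)"
proof -
  consider "x = a" | "E a x" | y where "x \<noteq> a" "y \<noteq> a" "reach_le E a y (2*r)" "E y x"
    using reach_le_last_step[OF assms(2)] by blast
  then show ?thesis
  proof cases
    case 2
    then show ?thesis by (auto simp: moved_def)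
  next
    case 3
    then show ?thesis using shell_vertsI[of E x y a "2*r"] sym assms(2) by blast
  qed simp
qed

definition switch_map :: "('a \<Rightarrow> 'a \<Rightarrow> bool) \<Rightarrow> nat \<Rightarrow> 'a \<Rightarrow> 'a \<Rightarrow> ('a \<Rightarrow> 'a) \<Rightarrow> 'a \<Rightarrow> 'a" where
  "switch_map E r v w \<phi> x = (if x = v then w else if x \<in> shell_verts E v 1 (2*r) then \<phi> x else x)"

lemma switch_map_center [simp]: "switch_map E r v w \<phi> v = w"
  by (simp add: switch_map_def)

lemma switch_map_shell: "s \<in> shell_verts E v 1 (2*r) \<Longrightarrow> switch_map E r v w \<phi> s = \<phi> s"
  using shell_vertsD(1) by (fastforce simp: switch_map_def)

lemma switch_E_commute: "switch_E E r w v = switch_E E r v w"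
  by (intro ext) (auto simp: switch_E_def)

lemma switch_lab_commute: "v \<noteq> w \<Longrightarrow> switch_lab lab w v = switch_lab lab v w"
  by (simp add: switch_lab_def fun_upd_twist)

locale switching =
  fixes V :: "'a set" and E :: "'a \<Rightarrow> 'a \<Rightarrow> bool" and lab :: "'a \<Rightarrow> 'l"
    and r :: nat and v w :: 'a and \<phi> :: "'a \<Rightarrow> 'a"
  assumes graph: "lgraph V E" and r_pos: "1 \<le> r" and v_in_V: "v \<in> V" and w_in_V: "w \<in> V"
    and shell_iso: "shell_iso E lab r v w \<phi>" and far: "\<not> reach_le E v w (2*r)"
begin

text \<open>The simplifier rewrites the literal 1 in Sv and Sw to Suc 0 (One_nat_def), so facts whose
  conclusion mentions Sv or Sw are passed with using rather than as simplification rules.\<close>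

abbreviation "Sv \<equiv> shell_verts E v 1 (2*r)"
abbreviation "Sw \<equiv> shell_verts E w 1 (2*r)"
abbreviation "E' \<equiv> switch_E E r v w"
abbreviation "lab' \<equiv> switch_lab lab v w"
abbreviation "f \<equiv> switch_map E r v w \<phi>"
abbreviation "\<psi> \<equiv> inv_into Sv \<phi>"

lemma edge_sym: "E x y \<Longrightarrow> E y x"
  using lgraph_sym[OF graph] .

lemma edge_reach_le: "E x y \<Longrightarrow> reach_le E x y (2*r)"
  using r_pos reach_le_mono[of E x y "Suc 0" "2*r"] by auto

lemma reach_le_step_2r: "reach_le E a x (2*r - 1) \<Longrightarrow> E x y \<Longrightarrow> reach_le E a y (2*r)"
  using r_pos by (cases r) auto

lemma far_sym: "\<not> reach_le E w v (2*r)"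
  using far reach_le_sym edge_sym by metis

lemma v_ne_w: "v \<noteq> w"
  using far reach_le_mono[of E v v 0 "2*r"] by auto

lemma phi_bij: "bij_betw \<phi> Sv Sw"
  using shell_iso by (simp add: shell_iso_def)

lemma phi_in_Sw: "x \<in> Sv \<Longrightarrow> \<phi> x \<in> Sw"
  using phi_bij bij_betwE by blast

lemma phi_edge_iff:
  assumes x: "x \<in> Sv" and y: "y \<in> Sv"
  shows "E (\<phi> x) (\<phi> y) \<longleftrightarrow> E x y"
proof -
  have "shell_edge E v 1 (2*r) x y \<longleftrightarrow> shell_edge E w 1 (2*r) (\<phi> x) (\<phi> y)"
    using shell_iso x y by (simp add: shell_iso_def)
  then show ?thesis
    using shell_edge_iff_edge[OF x y] shell_edge_iff_edge[OF phi_in_Sw[OF x] phi_in_Sw[OF y]] by simp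
qed

lemma phi_label: "x \<in> Sv \<Longrightarrow> lab (\<phi> x) = lab x"
  using shell_iso by (simp add: shell_iso_def)

lemma phi_reach_le_iff: "x \<in> Sv \<Longrightarrow> reach_le E w (\<phi> x) k \<longleftrightarrow> reach_le E v x k"
  using shell_iso by (simp add: shell_iso_def flip: gdist_le_iff_reach_le)

lemma Sv_not_centers: "x \<in> Sv \<Longrightarrow> x \<noteq> v \<and> x \<noteq> w"
  using shell_vertsD[of x E v "2*r"] far by auto

lemma Sw_not_centers: "y \<in> Sw \<Longrightarrow> y \<noteq> v \<and> y \<noteq> w"
  using shell_vertsD[of y E w "2*r"] far_sym by auto

lemma phi_adjacent_iff:
  assumes "x \<in> Sv"
  shows "E w (\<phi> x) \<longleftrightarrow> E v x"
  using phi_reach_le_iff[OF assms, of "Suc 0"] shell_vertsD(1)[OF assms]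
    Sw_not_centers[OF phi_in_Sw[OF assms]] by auto

lemma moved_v_pendant: "p \<in> moved E r v \<Longrightarrow> E v p \<and> (\<forall>y. E p y \<longrightarrow> y = v)"
  using moved_iff_pendant[OF graph r_pos] by blast

lemma moved_v_not_centers:
  assumes "p \<in> moved E r v"
  shows "p \<noteq> v \<and> p \<noteq> w"
proof -
  have "E v p" using moved_v_pendant[OF assms] by blast
  then show ?thesis using lgraph_irrefl[OF graph] edge_reach_le far by blast
qed

lemma moved_v_not_moved_w: "p \<in> moved E r v \<Longrightarrow> p \<notin> moved E r w"
  using moved_v_pendant moved_iff_pendant[OF graph r_pos, of p w] v_ne_w edge_sym by blast

lemma moved_v_not_Sw: "p \<in> moved E r v \<Longrightarrow> p \<notin> Sw"
  using moved_v_pendant far_sym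
  by (auto simp: shell_verts_def shell_edge_def gdist_le_iff_reach_le)

lemma moved_w_not_Sw: "p \<in> moved E r w \<Longrightarrow> p \<notin> Sw"
  by (simp add: moved_def)

lemma centers_not_moved: "v \<notin> moved E r v" "w \<notin> moved E r w" "w \<notin> moved E r v" "v \<notin> moved E r w"
  using lgraph_irrefl[OF graph] edge_reach_le far far_sym by (auto simp: moved_def)

lemma switch_E_sym: "E' x y \<Longrightarrow> E' y x"
  unfolding switch_E_def using edge_sym by blast

lemma switch_E_off_centers: "x \<notin> {v, w} \<Longrightarrow> y \<notin> {v, w} \<Longrightarrow> E' x y \<longleftrightarrow> E x y"
  by (auto simp: switch_E_def)

lemma switch_E_w_iff: "E' w y \<longleftrightarrow> (E w y \<and> y \<notin> moved E r w) \<or> y \<in> moved E r v"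
  using v_ne_w centers_not_moved by (auto simp: switch_E_def)

lemma switch_E_v_iff: "E' v y \<longleftrightarrow> (E v y \<and> y \<notin> moved E r v) \<or> y \<in> moved E r w"
  using v_ne_w centers_not_moved by (auto simp: switch_E_def)

lemma switch_E_moved_iff:
  assumes p: "p \<in> moved E r v"
  shows "E' p y \<longleftrightarrow> y = w"
proof -
  have p_v: "E v p" "\<forall>z. E p z \<longrightarrow> z = v" and "p \<notin> {v, w}"
    using moved_v_pendant[OF p] moved_v_not_centers[OF p] by auto
  consider "y = w" | "y = v" | "y \<notin> {v, w}" by blast
  then show ?thesis
  proof cases
    case 1
    then show ?thesis using p switch_E_w_iff switch_E_sym by blast
  next
    case 2
    then show ?thesis
      using moved_v_not_moved_w[OF p] p switch_E_v_iff switch_E_sym v_ne_w by blast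
  next
    case 3
    then show ?thesis using switch_E_off_centers[OF \<open>p \<notin> {v, w}\<close>] p_v by auto
  qed
qed

lemma switch_E_imp_edge: "E' x y \<Longrightarrow> x \<notin> {v, w} \<Longrightarrow> E x y \<or> E x v \<or> E x w"
  unfolding switch_E_def moved_def using edge_sym by blast

lemma lgraph_switch_E: "lgraph V E'"
proof -
  have "x \<in> V" if "E' x y" for x y
    using that v_in_V w_in_V moved_v_pendant moved_iff_pendant[OF graph r_pos, of _ w]
    unfolding switch_E_def by (blast dest: lgraph_edgeD[OF graph])
  moreover have "\<not> E' x x" for x
    using lgraph_irrefl[OF graph] centers_not_moved unfolding switch_E_def by blast
  ultimately show ?thesis
    using graph switch_E_sym unfolding lgraph_def by blast
qed

lemma near_v_cases:
  assumes "reach_le E v x (2*r)"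
  obtains "x = v" | "x \<in> moved E r v" | "x \<in> Sv"
  using near_vertex_cases[OF edge_sym assms] by blast

lemma switch_map_moved: "p \<in> moved E r v \<Longrightarrow> f p = p"
  using moved_v_not_centers by (simp add: switch_map_def moved_def)

lemma switch_map_eq_w_iff:
  assumes "reach_le E v x (2*r)"
  shows "f x = w \<longleftrightarrow> x = v"
proof (cases rule: near_v_cases[OF assms])
  case 2
  then show ?thesis using switch_map_moved moved_v_not_centers by simp
next
  case 3
  then show ?thesis using Sv_not_centers Sw_not_centers[OF phi_in_Sw] by (simp add: switch_map_shell)
qed simp

lemma switch_E_w_switch_map_iff: "reach_le E v y (2*r) \<Longrightarrow> E' w (f y) \<longleftrightarrow> E v y"
proof (erule near_v_cases)
  assume "y = v"
  then show ?thesis using switch_E_w_iff lgraph_irrefl[OF graph] centers_not_moved by simp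
next
  assume "y \<in> moved E r v"
  then show ?thesis using switch_E_w_iff switch_map_moved moved_v_pendant by simp
next
  assume y: "y \<in> Sv"
  have "\<phi> y \<notin> moved E r w" "\<phi> y \<notin> moved E r v"
    using moved_w_not_Sw moved_v_not_Sw phi_in_Sw[OF y] by blast+
  then show ?thesis using switch_E_w_iff switch_map_shell[OF y] phi_adjacent_iff[OF y] by simp
qed

lemma switch_map_edge_iff:
  assumes xr: "reach_le E v x (2*r)" and yr: "reach_le E v y (2*r)"
  shows "E' (f x) (f y) \<longleftrightarrow> E x y"
proof -
  have sym: "E a b \<longleftrightarrow> E b a" "E' a b \<longleftrightarrow> E' b a" for a b
    using edge_sym switch_E_sym by blast+
  show ?thesis
  proof (cases rule: near_v_cases[OF xr])
    case 1
    then show ?thesis using switch_E_w_switch_map_iff[OF yr] by simp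
  next
    case 2
    have "E' (f x) (f y) \<longleftrightarrow> f y = w" using switch_E_moved_iff[OF 2] switch_map_moved[OF 2] by simp
    also have "\<dots> \<longleftrightarrow> y = v" by (rule switch_map_eq_w_iff[OF yr])
    also have "\<dots> \<longleftrightarrow> E x y" using moved_v_pendant[OF 2] sym(1) by blast
    finally show ?thesis .
  next
    case x: 3
    show ?thesis
    proof (cases rule: near_v_cases[OF yr])
      case 1
      then show ?thesis using switch_E_w_switch_map_iff[OF xr] sym by simp
    next
      case 2
      have "E' (f x) (f y) \<longleftrightarrow> f x = w"
        using switch_E_moved_iff[OF 2, of "f x"] switch_map_moved[OF 2] switch_E_sym by auto
      also have "\<dots> \<longleftrightarrow> x = v" by (rule switch_map_eq_w_iff[OF xr])
      also have "\<dots> \<longleftrightarrow> E x y" using moved_v_pendant[OF 2] sym(1) by blast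
      finally show ?thesis .
    next
      case 3
      have "E' (f x) (f y) = E' (\<phi> x) (\<phi> y)" using x 3 by (simp add: switch_map_shell)
      also have "\<dots> = E (\<phi> x) (\<phi> y)"
        using switch_E_off_centers Sw_not_centers phi_in_Sw x 3 by simp
      also have "\<dots> = E x y" using phi_edge_iff x 3 by simp
      finally show ?thesis .
    qed
  qed
qed

lemma switch_map_label:
  assumes "reach_le E v x (2*r)"
  shows "lab' (f x) = lab x"
proof (cases rule: near_v_cases[OF assms])
  case 1
  then show ?thesis by (simp add: switch_lab_def)
next
  case 2
  then show ?thesis using switch_map_moved moved_v_not_centers by (simp add: switch_lab_def)
next
  case 3
  then have "lab' (f x) = lab (\<phi> x)"
    using Sw_not_centers[OF phi_in_Sw] by (simp add: switch_map_shell switch_lab_def)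
  then show ?thesis using phi_label 3 by simp
qed

lemma switch_map_image: "f ` {x. reach_le E v x (2*r)} = insert w (moved E r v \<union> Sw)"
proof
  show "f ` {x. reach_le E v x (2*r)} \<subseteq> insert w (moved E r v \<union> Sw)"
  proof
    fix y assume "y \<in> f ` {x. reach_le E v x (2*r)}"
    then obtain x where x: "reach_le E v x (2*r)" and y: "y = f x" by blast
    show "y \<in> insert w (moved E r v \<union> Sw)"
      by (cases rule: near_v_cases[OF x])
        (use phi_in_Sw in \<open>simp_all add: y switch_map_moved switch_map_shell\<close>)
  qed
  show "insert w (moved E r v \<union> Sw) \<subseteq> f ` {x. reach_le E v x (2*r)}"
  proof
    fix y assume "y \<in> insert w (moved E r v \<union> Sw)"
    then consider "y = w" | "y \<in> moved E r v" | s where "s \<in> Sv" "y = \<phi> s"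
      using phi_bij by (auto simp: bij_betw_def)
    then show "y \<in> f ` {x. reach_le E v x (2*r)}"
    proof cases
      case 1
      show ?thesis by (rule rev_image_eqI[of v]) (use 1 reach_le_mono[of E v v 0] in auto)
    next
      case 2
      show ?thesis
        by (rule rev_image_eqI[of y]) (use 2 moved_v_pendant edge_reach_le switch_map_moved in auto)
    next
      case 3
      show ?thesis
        by (rule rev_image_eqI[of s]) (use 3 shell_vertsD(2) in \<open>auto simp: switch_map_shell\<close>)
    qed
  qed
qed

lemma switch_E_from_near_v:
  assumes x: "reach_le E v x (2*r - 1)" and e: "E' (f x) y"
  shows "y \<in> insert w (moved E r v \<union> Sw)"
proof -
  have x2: "reach_le E v x (2*r)" using reach_le_mono[OF x] by simp
  show ?thesis
  proof (cases rule: near_v_cases[OF x2])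
    case 1
    then have "(E w y \<and> y \<notin> moved E r w) \<or> y \<in> moved E r v" using e switch_E_w_iff by simp
    then show ?thesis by (auto simp: moved_def)
  next
    case 2
    then show ?thesis using e switch_E_moved_iff switch_map_moved by simp
  next
    case 3
    then have e': "E' (\<phi> x) y" using e by (simp add: switch_map_shell)
    have wx: "reach_le E w (\<phi> x) (2*r - 1)" using phi_reach_le_iff[OF 3] x by simp
    have "\<phi> x \<notin> {v, w}" using Sw_not_centers[OF phi_in_Sw[OF 3]] by simp
    show ?thesis
    proof (cases "y \<in> {v, w}")
      case True
      have "y \<noteq> v"
      proof
        assume "y = v"
        then have "E' v (\<phi> x)" using e' switch_E_sym by simp
        moreover have "\<phi> x \<notin> moved E r v \<union> moved E r w"
          using moved_v_not_Sw moved_w_not_Sw phi_in_Sw[OF 3] by blast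
        ultimately have "E (\<phi> x) v" using switch_E_v_iff edge_sym by blast
        then show False using reach_le_step_2r[OF wx] far_sym by blast
      qed
      then show ?thesis using True by simp
    next
      case False
      then have "E (\<phi> x) y" using e' switch_E_off_centers[OF \<open>\<phi> x \<notin> {v, w}\<close>] by simp
      moreover have "reach_le E w (\<phi> x) (2*r)" using reach_le_mono[OF wx] by simp
      moreover have "reach_le E w y (2*r)" using reach_le_step_2r[OF wx \<open>E (\<phi> x) y\<close>] .
      ultimately have "y \<in> Sw"
        using shell_vertsI[of E y "\<phi> x" w "2*r"] edge_sym False \<open>\<phi> x \<notin> {v, w}\<close> by blast
      then show ?thesis by simp
    qed
  qed
qed

lemma switch_map_inverse:
  assumes "reach_le E v x (2*r)"
  shows "switch_map E r w v \<psi> (f x) = x"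
proof (cases rule: near_v_cases[OF assms])
  case 2
  have "switch_map E r w v \<psi> x = x"
    using moved_v_not_centers[OF 2] moved_v_not_Sw[OF 2] unfolding switch_map_def by simp
  then show ?thesis using switch_map_moved[OF 2] by simp
next
  case 3
  then have "switch_map E r w v \<psi> (f x) = \<psi> (\<phi> x)"
    using switch_map_shell[OF phi_in_Sw[OF 3]] by (simp add: switch_map_shell)
  also have "\<dots> = x" using phi_bij 3 by (simp add: bij_betw_def inv_into_f_f)
  finally show ?thesis .
qed simp

lemma inj_on_switch_map: "inj_on f {x. reach_le E v x (2*r)}"
  by (rule inj_on_inverseI[where g = "switch_map E r w v \<psi>"], rule switch_map_inverse) simp

lemma switch_map_in_V:
  assumes "reach_le E v x (2*r)"
  shows "f x \<in> V"
proof -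
  have "f x \<in> insert w (moved E r v \<union> Sw)" using assms switch_map_image by blast
  moreover have "moved E r v \<subseteq> V" using moved_v_pendant lgraph_edgeD[OF graph] by blast
  moreover have "Sw \<subseteq> V" by (rule shell_verts_subset[OF graph])
  ultimately show ?thesis using w_in_V by auto
qed

lemma reach_le_from_inner_ball:
  assumes "reach_le E v u r" "k < r" "reach_le E u x k"
  shows "reach_le E v x (2*r - 1)"
  using reach_le_mono[OF reach_le_trans[OF assms(1,3)]] assms(2) by simp

lemma nbhd_iso_near_v:
  assumes u: "reach_le E v u r"
  shows "nbhd_iso V E lab V E' lab' r u (f u)"
proof (rule nbhd_iso_of_local_iso[where A = "{x. reach_le E v x (2*r)}"])
  show "{x. reach_le E v x (2*r)} \<subseteq> V" using reach_le_in_vertices[OF graph v_in_V] by blast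
  show "f ` {x. reach_le E v x (2*r)} \<subseteq> V" using switch_map_in_V by blast
  show "inj_on f {x. reach_le E v x (2*r)}" by (rule inj_on_switch_map)
  show "u \<in> {x. reach_le E v x (2*r)}" using reach_le_mono[OF u] by simp
  show "\<forall>x\<in>{x. reach_le E v x (2*r)}. \<forall>y\<in>{x. reach_le E v x (2*r)}. E x y \<longleftrightarrow> E' (f x) (f y)"
    using switch_map_edge_iff by simp
  show "\<forall>x\<in>{x. reach_le E v x (2*r)}. lab' (f x) = lab x"
    using switch_map_label by simp
  show "y \<in> {x. reach_le E v x (2*r)}" if "k < r" "reach_le E u x k" "E x y" for x y k
    using reach_le_step_2r[OF reach_le_from_inner_ball[OF u that(1,2)] that(3)] by simp
  show "y \<in> f ` {x. reach_le E v x (2*r)}" if "k < r" "reach_le E u x k" "E' (f x) y" for x y k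
    using switch_E_from_near_v[OF reach_le_from_inner_ball[OF u that(1,2)] that(3)] switch_map_image
    by simp
qed

lemma switching_swap: "switching V E lab r w v \<psi>"
proof
  have bij: "bij_betw \<psi> Sw Sv" using phi_bij by (rule bij_betw_inv_into)
  have phi_psi: "\<phi> (\<psi> y) = y" if "y \<in> Sw" for y
    using phi_bij that by (simp add: bij_betw_def f_inv_into_f)
  have psi_Sv: "\<psi> y \<in> Sv" if "y \<in> Sw" for y using bij that bij_betwE by blast
  show "shell_iso E lab r w v \<psi>"
    unfolding shell_iso_def
  proof (intro conjI ballI bij)
    fix x y assume x: "x \<in> Sw" and y: "y \<in> Sw"
    show "shell_edge E w 1 (2*r) x y \<longleftrightarrow> shell_edge E v 1 (2*r) (\<psi> x) (\<psi> y)"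
      using shell_iso psi_Sv[OF x] psi_Sv[OF y] phi_psi[OF x] phi_psi[OF y]
      unfolding shell_iso_def by metis
  next
    fix x assume x: "x \<in> Sw"
    show "lab (\<psi> x) = lab x" using phi_label[OF psi_Sv[OF x]] phi_psi[OF x] by simp
    show "gdist E v (\<psi> x) = gdist E w x"
      using shell_iso psi_Sv[OF x] phi_psi[OF x] unfolding shell_iso_def by metis
  qed
qed (use graph r_pos w_in_V v_in_V far_sym in auto)

lemma nbhd_iso_far:
  assumes u: "u \<in> V" "\<not> reach_le E v u r" "\<not> reach_le E w u r"
  shows "nbhd_iso V E lab V E' lab' r u u"
proof -
  have off: "x \<notin> {v, w}" if "reach_le E u x k" "k \<le> r" for x k
    using reach_le_mono[OF reach_le_sym[OF edge_sym that(1)] that(2)] u by auto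
  have nbr_off: "y \<notin> {v, w}" if "reach_le E u x k" "k < r" "E x y" for x y k
    using off[of y "Suc k"] that by auto
  have "nbhd_iso V E lab V E' lab' r u (id u)"
  proof (rule nbhd_iso_of_local_iso[where A = "V - {v, w}"])
    show "u \<in> V - {v, w}" using u off[of u 0] by simp
    show "\<forall>x\<in>V - {v, w}. \<forall>y\<in>V - {v, w}. E x y \<longleftrightarrow> E' (id x) (id y)"
      using switch_E_off_centers by simp
    show "\<forall>x\<in>V - {v, w}. lab' (id x) = lab x" by (simp add: switch_lab_def)
    show "y \<in> V - {v, w}" if "k < r" "reach_le E u x k" "E x y" for x y k
      using nbr_off that lgraph_edgeD[OF graph] by blast
    show "y \<in> id ` (V - {v, w})" if "k < r" "reach_le E u x k" "E' (id x) y" for x y k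
    proof -
      have "E x y \<or> E x v \<or> E x w" using switch_E_imp_edge off that by simp
      then have "y \<notin> {v, w}" using nbr_off that by blast
      moreover have "y \<in> V" using lgraph_edgeD[OF lgraph_switch_E] that by simp
      ultimately show ?thesis by simp
    qed
  qed auto
  then show ?thesis by simp
qed

lemma balls_disjoint: "reach_le E v x r \<Longrightarrow> \<not> reach_le E w x r"
proof
  assume vx: "reach_le E v x r" and wx: "reach_le E w x r"
  from edge_sym wx have "reach_le E x w r" by (rule reach_le_sym)
  with vx have "reach_le E v w (r + r)" by (rule reach_le_trans)
  with far show False by (simp add: mult_2)
qed

lemma switch_map_leaves_ball:
  assumes u: "reach_le E v u r" and "f u \<noteq> u"
  shows "reach_le E w (f u) r"
proof -
  have "reach_le E v u (2*r)" using reach_le_mono[OF u] by simp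
  then show ?thesis
  proof (cases rule: near_v_cases)
    case 1
    then show ?thesis using reach_le_mono[of E w w 0 r] by simp
  next
    case 2
    then show ?thesis using \<open>f u \<noteq> u\<close> switch_map_moved by simp
  next
    case 3
    then show ?thesis using u phi_reach_le_iff[OF 3] by (simp add: switch_map_shell)
  qed
qed

lemma switch_map_swap: "switch_map E r v w (inv_into Sw \<psi>) = f"
proof
  fix x
  have "inv_into Sw \<psi> x = \<phi> x" if "x \<in> Sv"
  proof -
    have "inv_into Sw \<psi> x = inv_into Sw \<psi> (\<psi> (\<phi> x))"
      using phi_bij that by (simp add: bij_betw_def inv_into_f_f)
    also have "\<dots> = \<phi> x"
      using bij_betw_inv_into[OF phi_bij] phi_in_Sw[OF that] by (simp add: bij_betw_def inv_into_f_f)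
    finally show ?thesis .
  qed
  then show "switch_map E r v w (inv_into Sw \<psi>) x = f x"
    by (simp add: switch_map_def)
qed

definition nbhd_match :: "'a \<Rightarrow> 'a" where
  "nbhd_match u = (if reach_le E v u r then f u
     else if reach_le E w u r then switch_map E r w v \<psi> u else u)"

lemma nbhd_match_near_v: "reach_le E v u r \<Longrightarrow> nbhd_match u = f u"
  by (simp add: nbhd_match_def)

lemma nbhd_match_swap: "switching.nbhd_match E r w v \<psi> = nbhd_match"
proof
  fix u
  show "switching.nbhd_match E r w v \<psi> u = nbhd_match u"
    unfolding switching.nbhd_match_def[OF switching_swap] nbhd_match_def switch_map_swap
    using balls_disjoint by auto
qed

lemma nbhd_match_involutive_near_v:
  assumes u: "reach_le E v u r"
  shows "nbhd_match (nbhd_match u) = u"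
proof (cases "f u = u")
  case False
  then have "reach_le E w (f u) r" by (rule switch_map_leaves_ball[OF u])
  then have "nbhd_match (f u) = switch_map E r w v \<psi> (f u)"
    using balls_disjoint by (auto simp: nbhd_match_def)
  also have "\<dots> = u" using switch_map_inverse reach_le_mono[OF u] by simp
  finally show ?thesis using nbhd_match_near_v[OF u] by simp
qed (simp add: nbhd_match_near_v[OF u])

lemma nbhd_match_involutive: "nbhd_match (nbhd_match u) = u"
proof -
  interpret swapped: switching V E lab r w v \<psi> by (rule switching_swap)
  consider "reach_le E v u r" | "reach_le E w u r" | "\<not> reach_le E v u r" "\<not> reach_le E w u r"
    by blast
  then show ?thesis
  proof cases
    case 1
    then show ?thesis by (rule nbhd_match_involutive_near_v)
  next
    case 2
    then show ?thesis using swapped.nbhd_match_involutive_near_v nbhd_match_swap by simp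
  qed (simp add: nbhd_match_def)
qed

lemma nbhd_match_in_V: "u \<in> V \<Longrightarrow> nbhd_match u \<in> V"
proof -
  interpret swapped: switching V E lab r w v \<psi> by (rule switching_swap)
  assume "u \<in> V"
  consider "reach_le E v u r" | "reach_le E w u r" | "\<not> reach_le E v u r" "\<not> reach_le E w u r"
    by blast
  then show ?thesis
  proof cases
    case 1
    then show ?thesis using nbhd_match_near_v switch_map_in_V reach_le_mono[OF 1, of "2*r"] by simp
  next
    case 2
    then show ?thesis
      using swapped.nbhd_match_near_v swapped.switch_map_in_V reach_le_mono[OF 2, of "2*r"]
        nbhd_match_swap by simp
  qed (simp add: nbhd_match_def \<open>u \<in> V\<close>)
qed

lemma bij_betw_nbhd_match: "bij_betw nbhd_match V V"
  by (rule bij_betw_byWitness[where f' = nbhd_match]) (auto simp: nbhd_match_involutive nbhd_match_in_V)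

lemma nbhd_iso_nbhd_match: "u \<in> V \<Longrightarrow> nbhd_iso V E lab V E' lab' r u (nbhd_match u)"
proof -
  interpret swapped: switching V E lab r w v \<psi> by (rule switching_swap)
  assume "u \<in> V"
  consider "reach_le E v u r" | "reach_le E w u r" | "\<not> reach_le E v u r" "\<not> reach_le E w u r"
    by blast
  then show ?thesis
  proof cases
    case 1
    then show ?thesis using nbhd_iso_near_v nbhd_match_near_v by simp
  next
    case 2
    then have "nbhd_iso V E lab V (switch_E E r w v) (switch_lab lab w v) r u (nbhd_match u)"
      using swapped.nbhd_iso_near_v swapped.nbhd_match_near_v nbhd_match_swap by simp
    then show ?thesis by (simp only: switch_E_commute switch_lab_commute[OF v_ne_w])
  next
    case 3
    then show ?thesis using nbhd_iso_far \<open>u \<in> V\<close> by (simp add: nbhd_match_def)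
  qed
qed

end

theorem lemma2p1:
  fixes V :: "'a set" and E :: "'a \<Rightarrow> 'a \<Rightarrow> bool" and lab :: "'a \<Rightarrow> 'l"
    and r :: nat and v w :: 'a and \<phi> :: "'a \<Rightarrow> 'a"
  assumes "lgraph V E"
    and "r \<ge> 1"
    and "v \<in> V" and "w \<in> V"
    and "shell_iso E lab r v w \<phi>"
    and "gdist E v w > enat (2 * r)"
    and "\<not> lgraph_iso V E lab V (switch_E E r v w) (switch_lab lab v w)"
  shows "same_nbhds V E lab V (switch_E E r v w) (switch_lab lab v w) r
         \<and> \<not> identifiable V E lab r"
proof -
  have "\<not> reach_le E v w (2*r)"
    using assms(6) by (simp add: not_le flip: gdist_le_iff_reach_le)
  with assms(1-5) interpret switching V E lab r v w \<phi> by unfold_locales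
  have same: "same_nbhds V E lab V (switch_E E r v w) (switch_lab lab v w) r"
    unfolding same_nbhds_def using bij_betw_nbhd_match nbhd_iso_nbhd_match by blast
  moreover have "\<not> identifiable V E lab r"
    unfolding identifiable_def using lgraph_switch_E same assms(7) by blast
  ultimately show ?thesis ..
qed

end
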